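(* Let $\mathcal{G}$ be a graph with exactly two zealots, with opinions $-1$ and $1$, satisfying the balanced-exposure condition: no persuadable node is adjacent to exactly one zealot. Consider the SBCM on $\mathcal{G}$ with parameters $\gamma,\delta\ge0$, let $v=\omega(1)=\frac{1}{1+e^{\gamma-\gamma\delta}}$ and $g(\gamma)=2\gamma(1-v)-1$. Then (1) for every $\gamma$, the harmonic state $\bar{\mathbf{x}}$, in which every persuadable node has opinion $0$, is a steady state; and (2) $\bar{\mathbf{x}}$ is linearly stable if and only if $g(\gamma)<0$.
   Context: Let $\mathcal{G}$ be a finite undirected unweighted graph without self-loops, adjacency $i\sim j$, with nodes partitioned into zealots $\mathcal{Z}$ and persuadable nodes $\mathcal{P}$. With $w(x_i,x_j)=\omega(|x_i-x_j|)=\frac{1}{1+e^{\gamma(x_i-x_j)^2-\gamma\delta}}$ for $i\sim j$ and $0$ otherwise, the SBCM is $\frac{dx_i}{dt}=f_i(\mathbf{x})=\frac{\sum_j w(x_i,x_j)(x_j-x_i)}{\sum_j w(x_i,x_j)}$ for $i\in\mathcal{P}$ and $\frac{dx_i}{dt}=0$ for zealots. A steady state is linearly stable if all eigenvalues of $\mathbf{J}_{\mathcal{P}}=(\partial f_i/\partial x_j)_{i,j\in\mathcal{P}}$ at it are strictly negative. *)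

theory Defs
  imports "HOL-Analysis.Analysis"
begin

definition simple_graph :: "'a set \<Rightarrow> ('a \<Rightarrow> 'a \<Rightarrow> bool) \<Rightarrow> bool" where
  "simple_graph V E \<longleftrightarrow> finite V \<and> (\<forall>a b. E a b \<longrightarrow> a \<in> V \<and> b \<in> V)
     \<and> (\<forall>a b. E a b \<longrightarrow> E b a) \<and> (\<forall>a. \<not> E a a)"

definition graph_connected :: "'a set \<Rightarrow> ('a \<Rightarrow> 'a \<Rightarrow> bool) \<Rightarrow> bool" where
  "graph_connected V E \<longleftrightarrow> (\<forall>a\<in>V. \<forall>b\<in>V. E\<^sup>*\<^sup>* a b)"

definition omega :: "real \<Rightarrow> real \<Rightarrow> real \<Rightarrow> real" where
  "omega \<gamma> \<delta> r = 1 / (1 + exp (\<gamma> * r\<^sup>2 - \<gamma> * \<delta>))"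

definition weight :: "('a \<Rightarrow> 'a \<Rightarrow> bool) \<Rightarrow> real \<Rightarrow> real \<Rightarrow> ('a \<Rightarrow> real) \<Rightarrow> 'a \<Rightarrow> 'a \<Rightarrow> real" where
  "weight E \<gamma> \<delta> x i j = (if E i j then omega \<gamma> \<delta> \<bar>x i - x j\<bar> else 0)"

definition sbcm_rhs :: "'a set \<Rightarrow> ('a \<Rightarrow> 'a \<Rightarrow> bool) \<Rightarrow> real \<Rightarrow> real \<Rightarrow> ('a \<Rightarrow> real) \<Rightarrow> 'a \<Rightarrow> real" where
  "sbcm_rhs V E \<gamma> \<delta> x i =
     (\<Sum>j\<in>V. weight E \<gamma> \<delta> x i j * (x j - x i)) / (\<Sum>j\<in>V. weight E \<gamma> \<delta> x i j)"

text \<open>Steady state: f_i(x) = 0 for every persuadable node (zealots are fixed anyway).\<close>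
definition steady_state :: "'a set \<Rightarrow> ('a \<Rightarrow> 'a \<Rightarrow> bool) \<Rightarrow> 'a set \<Rightarrow> real \<Rightarrow> real \<Rightarrow> ('a \<Rightarrow> real) \<Rightarrow> bool" where
  "steady_state V E P \<gamma> \<delta> x \<longleftrightarrow> (\<forall>i\<in>P. sbcm_rhs V E \<gamma> \<delta> x i = 0)"

definition jacobian :: "'a set \<Rightarrow> ('a \<Rightarrow> 'a \<Rightarrow> bool) \<Rightarrow> real \<Rightarrow> real \<Rightarrow> ('a \<Rightarrow> real) \<Rightarrow> 'a \<Rightarrow> 'a \<Rightarrow> real" where
  "jacobian V E \<gamma> \<delta> x i j = deriv (\<lambda>t. sbcm_rhs V E \<gamma> \<delta> (x(j := t)) i) (x j)"

definition is_eigenvalue_on :: "'a set \<Rightarrow> ('a \<Rightarrow> 'a \<Rightarrow> real) \<Rightarrow> complex \<Rightarrow> bool" where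
  "is_eigenvalue_on P J mu \<longleftrightarrow> (\<exists>v :: 'a \<Rightarrow> complex. (\<exists>i\<in>P. v i \<noteq> 0) \<and>
      (\<forall>i\<in>P. (\<Sum>j\<in>P. complex_of_real (J i j) * v j) = mu * v i))"

definition linearly_stable :: "'a set \<Rightarrow> ('a \<Rightarrow> 'a \<Rightarrow> bool) \<Rightarrow> 'a set \<Rightarrow> real \<Rightarrow> real \<Rightarrow> ('a \<Rightarrow> real) \<Rightarrow> bool" where
  "linearly_stable V E P \<gamma> \<delta> x \<longleftrightarrow>
     (\<forall>mu. is_eigenvalue_on P (jacobian V E \<gamma> \<delta> x) mu \<longrightarrow> Im mu = 0 \<and> Re mu < 0)"

definition harmonic_state :: "'a \<Rightarrow> 'a \<Rightarrow> 'a \<Rightarrow> real" where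
  "harmonic_state z1 z2 = (\<lambda>i. if i = z1 then -1 else if i = z2 then 1 else 0)"

end

(*
  At the harmonic state each persuadable node sits at 0, and its zealot neighbours, if any,
  come as a pair at -1 and 1 whose pulls cancel, so the state is steady.  Since the numerator
  of the SBCM quotient vanishes there, the Jacobian is D^-1 M with D a positive diagonal and
  M symmetric: M is omega(0) times the negative graph Laplacian of the persuadable nodes plus
  the diagonal entry 2 v g(gamma) at nodes adjacent to the zealots.  The eigenvalues of such a
  pencil are real, and its largest one is the maximum of the Rayleigh quotient of M with
  respect to D.  If g(gamma) < 0, connectivity makes the form of M negative definite, so all
  eigenvalues are negative; if g(gamma) >= 0, the constant vector has a nonnegative quotient.
*)
theory Submission
  imports Defs
begin

definition bilin_form ::
    "'a set \<Rightarrow> ('a \<Rightarrow> 'a \<Rightarrow> real) \<Rightarrow> ('a \<Rightarrow> real) \<Rightarrow> ('a \<Rightarrow> real) \<Rightarrow> real"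
  where "bilin_form I A a b = (\<Sum>i\<in>I. \<Sum>j\<in>I. a i * A i j * b j)"

definition weighted_sqnorm :: "'a set \<Rightarrow> ('a \<Rightarrow> real) \<Rightarrow> ('a \<Rightarrow> real) \<Rightarrow> real"
  where "weighted_sqnorm I d a = (\<Sum>i\<in>I. d i * (a i)\<^sup>2)"

lemma bilin_form_row: "bilin_form I A a b = (\<Sum>i\<in>I. a i * (\<Sum>j\<in>I. A i j * b j))"
  by (simp add: bilin_form_def sum_distrib_left mult.assoc)

lemma bilin_form_commute:
  assumes "\<forall>i\<in>I. \<forall>j\<in>I. A i j = A j i"
  shows "bilin_form I A a b = bilin_form I A b a"
  unfolding bilin_form_def using assms
  by (subst sum.swap) (auto intro!: sum.cong simp: mult.commute mult.left_commute)

lemma bilin_form_scale: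
  "bilin_form I A (\<lambda>i. c * a i) (\<lambda>i. c * a i) = c\<^sup>2 * bilin_form I A a a"
  by (simp add: bilin_form_def sum_distrib_left power2_eq_square algebra_simps)

lemma bilin_form_shift:
  "bilin_form I A (\<lambda>i. a i + t * b i) (\<lambda>i. a i + t * b i)
     = bilin_form I A a a + t * (bilin_form I A a b + bilin_form I A b a) + t\<^sup>2 * bilin_form I A b b"
  by (simp add: bilin_form_def sum.distrib sum_distrib_left power2_eq_square algebra_simps)

lemma bilin_form_zero: "\<forall>i\<in>I. a i = 0 \<Longrightarrow> bilin_form I A a a = 0"
  by (simp add: bilin_form_def)

lemma bilin_form_restrict: "bilin_form I A (restrict a I) (restrict a I) = bilin_form I A a a"
  unfolding bilin_form_def by (intro sum.cong) auto

lemma bilin_form_diag_diff: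
  assumes "finite I"
  shows "bilin_form I (\<lambda>i j. (if i = j then c * d i else 0) - A i j) a a
     = c * weighted_sqnorm I d a - bilin_form I A a a"
proof -
  have "(\<Sum>j\<in>I. a i * (if i = j then c * d i else 0) * a j) = c * (d i * (a i)\<^sup>2)"
    if "i \<in> I" for i
  proof -
    have "(\<Sum>j\<in>I. a i * (if i = j then c * d i else 0) * a j)
        = (\<Sum>j\<in>I. if i = j then c * (d i * (a i)\<^sup>2) else 0)"
      by (intro sum.cong) (auto simp: power2_eq_square)
    then show ?thesis using assms that by simp
  qed
  then show ?thesis
    by (simp add: bilin_form_def weighted_sqnorm_def right_diff_distrib left_diff_distrib
        sum_subtractf sum_distrib_left)
qed

lemma weighted_sqnorm_scale:
  "weighted_sqnorm I d (\<lambda>i. c * a i) = c\<^sup>2 * weighted_sqnorm I d a"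
  by (simp add: weighted_sqnorm_def sum_distrib_left power2_eq_square algebra_simps)

lemma weighted_sqnorm_restrict: "weighted_sqnorm I d (restrict a I) = weighted_sqnorm I d a"
  unfolding weighted_sqnorm_def by (rule sum.cong) auto

lemma weighted_sqnorm_nonneg: "\<forall>i\<in>I. d i > 0 \<Longrightarrow> weighted_sqnorm I d a \<ge> 0"
  by (simp add: weighted_sqnorm_def sum_nonneg less_imp_le)

lemma weighted_sqnorm_eq_0_iff:
  assumes "finite I" "\<forall>i\<in>I. d i > 0"
  shows "weighted_sqnorm I d a = 0 \<longleftrightarrow> (\<forall>i\<in>I. a i = 0)"
  using assms by (force simp: weighted_sqnorm_def sum_nonneg_eq_0_iff less_imp_le)

lemma weighted_sqnorm_pos:
  assumes "finite I" "\<forall>i\<in>I. d i > 0" "\<exists>i\<in>I. a i \<noteq> 0"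
  shows "weighted_sqnorm I d a > 0"
  using assms weighted_sqnorm_eq_0_iff weighted_sqnorm_nonneg by (metis order_less_le)

lemma weighted_sqnorm_eq_1_bound:
  assumes "finite I" "\<forall>i\<in>I. d i > 0" "weighted_sqnorm I d a = 1" "i \<in> I"
  shows "\<bar>a i\<bar> \<le> sqrt (1 / d i)"
proof -
  have "d i * (a i)\<^sup>2 \<le> weighted_sqnorm I d a"
    unfolding weighted_sqnorm_def using assms by (intro member_le_sum) (auto simp: less_imp_le)
  then have "(a i)\<^sup>2 \<le> 1 / d i"
    using assms by (simp add: field_simps)
  then show ?thesis
    by (metis real_sqrt_abs real_sqrt_le_mono)
qed

lemma is_eigenvalue_on_cong:
  assumes "\<forall>i\<in>I. \<forall>j\<in>I. J i j = J' i j"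
  shows "is_eigenvalue_on I J \<mu> \<longleftrightarrow> is_eigenvalue_on I J' \<mu>"
proof -
  have "(\<Sum>j\<in>I. complex_of_real (J i j) * w j) = (\<Sum>j\<in>I. complex_of_real (J' i j) * w j)"
    if "i \<in> I" for i w
    using assms that by (intro sum.cong) auto
  then show ?thesis
    unfolding is_eigenvalue_on_def by simp
qed

lemma is_eigenvalue_on_of_real:
  assumes "\<exists>i\<in>I. l i \<noteq> 0" and "\<forall>i\<in>I. (\<Sum>j\<in>I. J i j * l j) = \<rho> * l i"
  shows "is_eigenvalue_on I J (complex_of_real \<rho>)"
  unfolding is_eigenvalue_on_def
proof (intro exI[of _ "\<lambda>i. complex_of_real (l i)"] conjI ballI)
  show "\<exists>i\<in>I. complex_of_real (l i) \<noteq> 0" using assms(1) by simp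
  fix i assume "i \<in> I"
  have "(\<Sum>j\<in>I. complex_of_real (J i j) * complex_of_real (l j))
      = complex_of_real (\<Sum>j\<in>I. J i j * l j)"
    by (simp only: of_real_mult of_real_sum)
  with assms(2) \<open>i \<in> I\<close> show "(\<Sum>j\<in>I. complex_of_real (J i j) * complex_of_real (l j))
      = complex_of_real \<rho> * complex_of_real (l i)"
    by (simp only: of_real_mult)
qed

lemma eigenvalue_neg_if_neg_definite:
  assumes "finite I" and sym: "\<forall>i\<in>I. \<forall>j\<in>I. A i j = A j i" and pos: "\<forall>i\<in>I. d i > 0"
    and negdef: "\<forall>a. (\<exists>i\<in>I. a i \<noteq> 0) \<longrightarrow> bilin_form I A a a < 0"
    and "is_eigenvalue_on I (\<lambda>i j. A i j / d i) \<mu>"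
  shows "Im \<mu> = 0 \<and> Re \<mu> < 0"
proof -
  obtain w where nz: "\<exists>i\<in>I. w i \<noteq> 0"
    and eig: "\<forall>i\<in>I. (\<Sum>j\<in>I. complex_of_real (A i j / d i) * w j) = \<mu> * w i"
    using assms(5) unfolding is_eigenvalue_on_def by blast
  define a where "a i = Re (w i)" for i
  define b where "b i = Im (w i)" for i
  define n where "n = weighted_sqnorm I d a + weighted_sqnorm I d b"
  have row: "(\<Sum>j\<in>I. complex_of_real (A i j) * w j) = \<mu> * of_real (d i) * w i" if "i \<in> I" for i
  proof -
    have "(\<Sum>j\<in>I. complex_of_real (A i j) * w j)
        = of_real (d i) * (\<Sum>j\<in>I. complex_of_real (A i j / d i) * w j)"
      using pos that by (simp add: sum_distrib_left less_imp_neq[symmetric])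
    then show ?thesis using eig that by simp
  qed
  \<comment> \<open>The Hermitian form of \<open>A\<close> at \<open>w\<close> equals \<open>\<mu> n\<close> and is real as \<open>A\<close> is symmetric.\<close>
  define H where "H = (\<Sum>i\<in>I. cnj (w i) * (\<Sum>j\<in>I. complex_of_real (A i j) * w j))"
  have "H = (\<Sum>i\<in>I. cnj (w i) * (\<mu> * of_real (d i) * w i))"
    by (simp add: H_def row)
  also have "\<dots> = (\<Sum>i\<in>I. \<mu> * of_real (d i * (a i)\<^sup>2 + d i * (b i)\<^sup>2))"
    by (intro sum.cong) (simp_all add: a_def b_def complex_eq_iff power2_eq_square algebra_simps)
  also have "\<dots> = \<mu> * of_real n"
    by (simp only: n_def weighted_sqnorm_def flip: sum_distrib_left sum.distrib of_real_sum)
  finally have "H = \<mu> * of_real n" .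
  moreover have "Re H = bilin_form I A a a + bilin_form I A b b"
    by (simp add: H_def bilin_form_row Re_sum a_def b_def algebra_simps sum.distrib)
  moreover have "Im H = bilin_form I A a b - bilin_form I A b a"
    by (simp add: H_def bilin_form_row Im_sum a_def b_def algebra_simps sum_subtractf)
  ultimately have ReH: "Re \<mu> * n = bilin_form I A a a + bilin_form I A b b"
    and ImH: "Im \<mu> * n = 0"
    using bilin_form_commute[OF sym, of a b] by simp_all
  have nz': "(\<exists>i\<in>I. a i \<noteq> 0) \<or> (\<exists>i\<in>I. b i \<noteq> 0)"
    using nz by (auto simp: a_def b_def complex_eq_iff)
  then have "n > 0"
    unfolding n_def using weighted_sqnorm_pos[OF \<open>finite I\<close> pos] weighted_sqnorm_nonneg[OF pos]
    by (meson add_nonneg_pos add_pos_nonneg)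
  moreover have "bilin_form I A a a + bilin_form I A b b < 0"
  proof -
    have "bilin_form I A c c \<le> 0" for c
      using negdef bilin_form_zero by (metis order.order_iff_strict)
    then show ?thesis using negdef nz' by (meson add_neg_nonpos add_nonpos_neg)
  qed
  ultimately have "Re \<mu> * n < 0" "n > 0"
    using ReH by simp_all
  then show ?thesis
    using ImH by (simp add: mult_less_0_iff)
qed

lemma linear_coeff_eq_0:
  fixes b c :: real
  assumes "\<forall>t. 0 \<le> b * t + c * t\<^sup>2"
  shows "b = 0"
proof (rule ccontr)
  assume "b \<noteq> 0"
  define t where "t = - b / (\<bar>c\<bar> + 1)"
  have "t \<noteq> 0" using \<open>b \<noteq> 0\<close> by (simp add: t_def add_nonneg_eq_0_iff)
  have "b = - t * (\<bar>c\<bar> + 1)" by (simp add: t_def add_nonneg_eq_0_iff)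
  then have "b * t + c * t\<^sup>2 = (c - \<bar>c\<bar>) * t\<^sup>2 - t\<^sup>2"
    by (simp only:) (simp add: power2_eq_square algebra_simps)
  also have "\<dots> < 0"
    using \<open>t \<noteq> 0\<close> mult_right_mono[of "c - \<bar>c\<bar>" 0 "t\<^sup>2"] by simp
  finally show False using assms by (metis not_le)
qed

lemma psd_form_kernel:
  assumes "finite I" and sym: "\<forall>i\<in>I. \<forall>j\<in>I. A i j = A j i"
    and psd: "\<forall>y. 0 \<le> bilin_form I A y y" and "bilin_form I A l l = 0"
  shows "\<forall>i\<in>I. (\<Sum>j\<in>I. A i j * l j) = 0"
proof -
  define w where "w i = (\<Sum>j\<in>I. A i j * l j)" for i
  have wl: "bilin_form I A w l = (\<Sum>i\<in>I. (w i)\<^sup>2)"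
    by (simp add: bilin_form_row w_def power2_eq_square)
  have "0 \<le> (2 * bilin_form I A w l) * t + bilin_form I A w w * t\<^sup>2" for t
    using psd[rule_format, of "\<lambda>i. l i + t * w i"] \<open>bilin_form I A l l = 0\<close>
      bilin_form_commute[OF sym, of l w]
    by (simp add: bilin_form_shift algebra_simps)
  then have "2 * bilin_form I A w l = 0"
    by (intro linear_coeff_eq_0) blast
  then have "(\<Sum>i\<in>I. (w i)\<^sup>2) = 0"
    using wl by simp
  then show ?thesis
    using \<open>finite I\<close> by (simp add: sum_nonneg_eq_0_iff w_def)
qed

lemma compactin_weighted_sphere:
  assumes "finite I" and pos: "\<forall>i\<in>I. d i > 0"
  defines "X \<equiv> product_topology (\<lambda>_. euclideanreal) I"
  shows "compactin X {a \<in> topspace X. weighted_sqnorm I d a = 1}" (is "compactin X ?S")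
proof (rule closed_compactin)
  show "compactin X (\<Pi>\<^sub>E i\<in>I. {- sqrt (1 / d i)..sqrt (1 / d i)})"
    by (simp add: X_def compactin_PiE)
  show "?S \<subseteq> (\<Pi>\<^sub>E i\<in>I. {- sqrt (1 / d i)..sqrt (1 / d i)})"
  proof
    fix a assume "a \<in> ?S"
    then have "a i \<in> {- sqrt (1 / d i)..sqrt (1 / d i)}" if "i \<in> I" for i
      using weighted_sqnorm_eq_1_bound[OF \<open>finite I\<close> pos _ that, of a] by (simp add: abs_le_iff)
    then show "a \<in> (\<Pi>\<^sub>E i\<in>I. {- sqrt (1 / d i)..sqrt (1 / d i)})"
      using \<open>a \<in> ?S\<close> by (simp add: X_def PiE_iff)
  qed
  have "continuous_map X euclideanreal (weighted_sqnorm I d)"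
    unfolding X_def weighted_sqnorm_def using \<open>finite I\<close> by (intro continuous_intros) auto
  then show "closedin X ?S"
    using closedin_continuous_map_preimage[of X euclideanreal _ "{1}"] by simp
qed

lemma bilin_form_attains_max_on_sphere:
  assumes "finite I" "I \<noteq> {}" and pos: "\<forall>i\<in>I. d i > 0"
  obtains l where "weighted_sqnorm I d l = 1"
    and "\<forall>y. weighted_sqnorm I d y = 1 \<longrightarrow> bilin_form I A y y \<le> bilin_form I A l l"
proof -
  define X where "X = product_topology (\<lambda>_. euclideanreal) I"
  define S where "S = {a \<in> topspace X. weighted_sqnorm I d a = 1}"
  have "continuous_map X euclideanreal (\<lambda>a. bilin_form I A a a)"
    unfolding X_def bilin_form_def using \<open>finite I\<close> by (intro continuous_intros) auto
  then have "compact ((\<lambda>a. bilin_form I A a a) ` S)"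
    using image_compactin compactin_weighted_sphere[OF \<open>finite I\<close> pos]
    unfolding S_def X_def by fastforce
  moreover have "S \<noteq> {}"
  proof -
    define c where "c = 1 / sqrt (weighted_sqnorm I d (\<lambda>_. 1))"
    have "weighted_sqnorm I d (\<lambda>_. 1) > 0"
      using assms by (intro weighted_sqnorm_pos) auto
    then have "weighted_sqnorm I d (\<lambda>_. c) = 1"
      using weighted_sqnorm_scale[of I d c "\<lambda>_. 1"] by (simp add: c_def power_divide)
    then have "restrict (\<lambda>_. c) I \<in> S"
      by (simp add: S_def X_def weighted_sqnorm_restrict)
    then show ?thesis by blast
  qed
  ultimately obtain l where "l \<in> S" and max: "\<forall>a\<in>S. bilin_form I A a a \<le> bilin_form I A l l"
    using compact_attains_sup[of "(\<lambda>a. bilin_form I A a a) ` S"] by blast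
  show thesis
  proof
    show "weighted_sqnorm I d l = 1" using \<open>l \<in> S\<close> by (simp add: S_def)
    show "\<forall>y. weighted_sqnorm I d y = 1 \<longrightarrow> bilin_form I A y y \<le> bilin_form I A l l"
    proof (intro allI impI)
      fix y assume "weighted_sqnorm I d y = 1"
      then have "restrict y I \<in> S"
        by (simp add: S_def X_def weighted_sqnorm_restrict)
      then show "bilin_form I A y y \<le> bilin_form I A l l"
        using max bilin_form_restrict by metis
    qed
  qed
qed

lemma rayleigh_max:
  assumes "finite I" "I \<noteq> {}" and pos: "\<forall>i\<in>I. d i > 0"
  obtains l \<rho> where "weighted_sqnorm I d l = 1" "bilin_form I A l l = \<rho>"
    and "\<forall>y. bilin_form I A y y \<le> \<rho> * weighted_sqnorm I d y"
proof -
  obtain l where l: "weighted_sqnorm I d l = 1"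
    and max: "\<forall>y. weighted_sqnorm I d y = 1 \<longrightarrow> bilin_form I A y y \<le> bilin_form I A l l"
    using bilin_form_attains_max_on_sphere[OF assms] by blast
  have "bilin_form I A y y \<le> bilin_form I A l l * weighted_sqnorm I d y" for y
  proof (cases "\<forall>i\<in>I. y i = 0")
    case True
    then show ?thesis by (simp add: bilin_form_zero weighted_sqnorm_def)
  next
    case False
    then have N: "weighted_sqnorm I d y > 0"
      using weighted_sqnorm_pos[OF \<open>finite I\<close> pos] by blast
    define c where "c = 1 / sqrt (weighted_sqnorm I d y)"
    have c2: "c\<^sup>2 * weighted_sqnorm I d y = 1"
      using N by (simp add: c_def power_divide)
    then have "c\<^sup>2 * bilin_form I A y y \<le> bilin_form I A l l"
      using max weighted_sqnorm_scale bilin_form_scale by metis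
    then show ?thesis
      using N c2 by (simp add: c_def power_divide field_simps)
  qed
  with l that show thesis by blast
qed

lemma rayleigh_max_eigenvector:
  assumes "finite I" and sym: "\<forall>i\<in>I. \<forall>j\<in>I. A i j = A j i"
    and max: "\<forall>y. bilin_form I A y y \<le> \<rho> * weighted_sqnorm I d y"
    and l: "bilin_form I A l l = \<rho> * weighted_sqnorm I d l"
  shows "\<forall>i\<in>I. (\<Sum>j\<in>I. A i j * l j) = \<rho> * d i * l i"
proof -
  define B where "B = (\<lambda>i j. (if i = j then \<rho> * d i else 0) - A i j)"
  have "\<forall>i\<in>I. (\<Sum>j\<in>I. B i j * l j) = 0"
  proof (rule psd_form_kernel[OF \<open>finite I\<close>])
    show "\<forall>i\<in>I. \<forall>j\<in>I. B i j = B j i" using sym by (simp add: B_def)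
    show "\<forall>y. 0 \<le> bilin_form I B y y" "bilin_form I B l l = 0"
      using max l by (simp_all add: B_def bilin_form_diag_diff[OF \<open>finite I\<close>])
  qed
  moreover have "(\<Sum>j\<in>I. B i j * l j) = \<rho> * d i * l i - (\<Sum>j\<in>I. A i j * l j)" if "i \<in> I" for i
  proof -
    have "(\<Sum>j\<in>I. B i j * l j) = (\<Sum>j\<in>I. (if i = j then \<rho> * d i * l j else 0) - A i j * l j)"
      unfolding B_def by (intro sum.cong) (auto simp: left_diff_distrib)
    also have "\<dots> = \<rho> * d i * l i - (\<Sum>j\<in>I. A i j * l j)"
      using that \<open>finite I\<close> by (simp add: sum_subtractf)
    finally show ?thesis .
  qed
  ultimately show ?thesis by (metis eq_iff_diff_eq_0)
qed

lemma exists_nonneg_eigenvalue: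
  assumes "finite I" and sym: "\<forall>i\<in>I. \<forall>j\<in>I. A i j = A j i" and pos: "\<forall>i\<in>I. d i > 0"
    and "\<exists>i\<in>I. y i \<noteq> 0" and "0 \<le> bilin_form I A y y"
  shows "\<exists>\<rho>\<ge>0. is_eigenvalue_on I (\<lambda>i j. A i j / d i) (complex_of_real \<rho>)"
proof -
  have "I \<noteq> {}" using assms(4) by blast
  then obtain l \<rho> where l: "weighted_sqnorm I d l = 1" "bilin_form I A l l = \<rho>"
    and max: "\<forall>y. bilin_form I A y y \<le> \<rho> * weighted_sqnorm I d y"
    using rayleigh_max[OF \<open>finite I\<close> _ pos] by blast
  have "\<forall>i\<in>I. (\<Sum>j\<in>I. A i j * l j) = \<rho> * d i * l i"
    using rayleigh_max_eigenvector[OF \<open>finite I\<close> sym max] l by simp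
  then have "\<forall>i\<in>I. (\<Sum>j\<in>I. A i j / d i * l j) = \<rho> * l i"
    using pos by (force simp flip: sum_divide_distrib)
  moreover have "\<exists>i\<in>I. l i \<noteq> 0"
    using l weighted_sqnorm_eq_0_iff[OF \<open>finite I\<close> pos, of l] by auto
  moreover have "\<rho> \<ge> 0"
  proof -
    have "weighted_sqnorm I d y > 0"
      using weighted_sqnorm_pos[OF \<open>finite I\<close> pos assms(4)] .
    moreover have "0 \<le> \<rho> * weighted_sqnorm I d y"
      using max[rule_format, of y] assms(5) by linarith
    ultimately show ?thesis by (simp add: zero_le_mult_iff)
  qed
  ultimately show ?thesis
    using is_eigenvalue_on_of_real[of I l "\<lambda>i j. A i j / d i" \<rho>] by blast
qed

lemma omega_pos: "omega \<gamma> \<delta> r > 0"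
  by (simp add: omega_def add_pos_pos)

lemma omega_abs_diff: "omega \<gamma> \<delta> \<bar>a - b\<bar> = omega \<gamma> \<delta> (b - a)"
  by (simp add: omega_def power2_commute)

lemma omega_has_real_derivative:
  "(omega \<gamma> \<delta> has_real_derivative - 2 * \<gamma> * r * omega \<gamma> \<delta> r * (1 - omega \<gamma> \<delta> r)) (at r)"
proof -
  have "1 + exp (\<gamma> * r\<^sup>2 - \<gamma> * \<delta>) \<noteq> 0"
    by (metis add_pos_pos exp_gt_zero less_irrefl zero_less_one)
  then show ?thesis
    unfolding omega_def[abs_def]
    by (auto intro!: derivative_eq_intros simp: field_simps power2_eq_square)
qed

definition influence :: "real \<Rightarrow> real \<Rightarrow> real \<Rightarrow> real" where
  "influence \<gamma> \<delta> r = r * omega \<gamma> \<delta> r"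

definition influence_deriv :: "real \<Rightarrow> real \<Rightarrow> real \<Rightarrow> real" where
  "influence_deriv \<gamma> \<delta> r = omega \<gamma> \<delta> r * (1 - 2 * \<gamma> * r\<^sup>2 * (1 - omega \<gamma> \<delta> r))"

lemma influence_has_real_derivative:
  "(influence \<gamma> \<delta> has_real_derivative influence_deriv \<gamma> \<delta> r) (at r)"
  unfolding influence_def[abs_def] influence_deriv_def
  by (auto intro!: derivative_eq_intros omega_has_real_derivative simp: power2_eq_square algebra_simps)

lemma weight_eq: "weight E \<gamma> \<delta> x i k = (if E i k then omega \<gamma> \<delta> (x k - x i) else 0)"
  by (simp add: weight_def omega_abs_diff)

lemma sbcm_rhs_eq:
  "sbcm_rhs V E \<gamma> \<delta> x i
     = (\<Sum>k\<in>V. if E i k then influence \<gamma> \<delta> (x k - x i) else 0)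
       / (\<Sum>k\<in>V. weight E \<gamma> \<delta> x i k)"
  unfolding sbcm_rhs_def
  by (intro arg_cong2[where f="(/)"] sum.cong) (auto simp: weight_eq influence_def)

lemma has_real_derivative_upd_diff:
  assumes "\<And>r. (f has_real_derivative f' r) (at r)"
  shows "((\<lambda>t. f ((x(j := t)) k - (x(j := t)) i)) has_real_derivative
           f' (x k - x i) * (of_bool (k = j) - of_bool (i = j))) (at (x j))"
proof -
  have "((\<lambda>t. (x(j := t)) k - (x(j := t)) i) has_real_derivative
      of_bool (k = j) - of_bool (i = j)) (at (x j))"
    by (auto intro!: derivative_eq_intros)
  from DERIV_chain'[OF this assms] show ?thesis by simp
qed

lemma deriv_divide_at_zero:
  assumes "(f has_real_derivative f') (at a)" "(g has_real_derivative g') (at a)"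
    and "f a = 0" "g a \<noteq> 0"
  shows "deriv (\<lambda>t. f t / g t) a = f' / g a"
  using DERIV_imp_deriv[OF DERIV_divide[OF assms(1,2,4)]] assms(3,4) by (simp add: field_simps)

lemma has_real_derivative_neighbour_sum:
  assumes "\<And>r. (f has_real_derivative f' r) (at r)"
  shows "((\<lambda>t. \<Sum>k\<in>V. if E i k then f ((x(j := t)) k - (x(j := t)) i) else 0)
           has_real_derivative
           (\<Sum>k\<in>V. if E i k then f' (x k - x i) * (of_bool (k = j) - of_bool (i = j)) else 0))
         (at (x j))"
proof (rule DERIV_sum)
  fix k
  show "((\<lambda>t. if E i k then f ((x(j := t)) k - (x(j := t)) i) else 0) has_real_derivative
      (if E i k then f' (x k - x i) * (of_bool (k = j) - of_bool (i = j)) else 0)) (at (x j))"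
    using has_real_derivative_upd_diff[OF assms, of x j k i] by (cases "E i k") simp_all
qed

lemma jacobian_at_rest:
  assumes "finite V" "k\<^sub>0 \<in> V" "E i k\<^sub>0" and rest: "sbcm_rhs V E \<gamma> \<delta> x i = 0"
  shows "jacobian V E \<gamma> \<delta> x i j
     = (\<Sum>k\<in>V. if E i k
           then influence_deriv \<gamma> \<delta> (x k - x i) * (of_bool (k = j) - of_bool (i = j)) else 0)
       / (\<Sum>k\<in>V. weight E \<gamma> \<delta> x i k)"
proof -
  define N where
    "N t = (\<Sum>k\<in>V. if E i k then influence \<gamma> \<delta> ((x(j := t)) k - (x(j := t)) i) else 0)" for t
  define D where
    "D t = (\<Sum>k\<in>V. if E i k then omega \<gamma> \<delta> ((x(j := t)) k - (x(j := t)) i) else 0)" for t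
  have rhs: "sbcm_rhs V E \<gamma> \<delta> (x(j := t)) i = N t / D t" for t
    by (simp add: sbcm_rhs_eq N_def D_def weight_eq)
  have D: "D (x j) = (\<Sum>k\<in>V. weight E \<gamma> \<delta> x i k)"
    unfolding D_def fun_upd_triv by (simp add: weight_eq)
  have "D (x j) > 0"
    unfolding D_def using assms(1-3) by (intro sum_pos2[of V k\<^sub>0]) (auto simp: omega_pos less_imp_le)
  moreover have "N (x j) = 0"
    using rest rhs[of "x j"] \<open>D (x j) > 0\<close> by simp
  moreover note has_real_derivative_neighbour_sum[OF influence_has_real_derivative, where x=x]
    has_real_derivative_neighbour_sum[OF omega_has_real_derivative, where x=x]
  ultimately show ?thesis
    unfolding jacobian_def rhs D[symmetric]
    by (intro deriv_divide_at_zero) (simp_all add: N_def D_def)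
qed

lemma laplacian_form:
  assumes "finite I" and sym: "\<forall>i\<in>I. \<forall>j\<in>I. E i j \<longrightarrow> E j i"
  shows "(\<Sum>i\<in>I. \<Sum>j\<in>I. of_bool (E i j) * a i * a j)
         - (\<Sum>i\<in>I. (\<Sum>j\<in>I. of_bool (E i j)) * (a i)\<^sup>2)
       = - (\<Sum>i\<in>I. \<Sum>j\<in>I. of_bool (E i j) * (a i - a j)\<^sup>2) / (2 :: real)"
proof -
  have "(\<Sum>i\<in>I. \<Sum>j\<in>I. of_bool (E i j) * (a j)\<^sup>2)
      = (\<Sum>j\<in>I. \<Sum>i\<in>I. of_bool (E j i) * (a j)\<^sup>2)"
    using sym by (subst sum.swap) (intro sum.cong refl arg_cong2[where f="(*)"]; auto)
  then show ?thesis
    by (simp add: power2_diff sum_distrib_left sum_distrib_right right_diff_distrib distrib_left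
        sum_subtractf sum.distrib algebra_simps)
qed

lemma connected_locally_constant:
  assumes "graph_connected V E" and "\<forall>a b. E a b \<longrightarrow> b \<in> V" and "z \<in> Z" "z \<in> V"
    and "\<forall>i\<in>V - Z. \<forall>j\<in>V - Z. E i j \<longrightarrow> f i = f j"
    and "\<forall>i\<in>V - Z. \<forall>z\<in>Z. E i z \<longrightarrow> f i = c"
    and "i \<in> V - Z"
  shows "f i = c"
proof -
  have "E\<^sup>*\<^sup>* i z" using assms(1,4,7) by (simp add: graph_connected_def)
  then have "i \<in> V - Z \<longrightarrow> f i = c"
  proof (induction rule: converse_rtranclp_induct)
    case base
    then show ?case using \<open>z \<in> Z\<close> by simp
  next
    case (step y y')
    then show ?case using assms(2,5,6) by blast
  qed
  then show ?thesis using \<open>i \<in> V - Z\<close> by blast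
qed

locale two_zealots =
  fixes V :: "'a set" and E :: "'a \<Rightarrow> 'a \<Rightarrow> bool" and z\<^sub>1 z\<^sub>2 :: 'a and \<gamma> \<delta> :: real
  assumes graph: "simple_graph V E" and conn: "graph_connected V E"
    and zealots: "z\<^sub>1 \<in> V" "z\<^sub>2 \<in> V" "z\<^sub>1 \<noteq> z\<^sub>2"
    and balanced: "\<forall>i \<in> V - {z\<^sub>1, z\<^sub>2}. E i z\<^sub>1 \<longleftrightarrow> E i z\<^sub>2"
begin

abbreviation "P \<equiv> V - {z\<^sub>1, z\<^sub>2}"
abbreviation "x\<^sub>h \<equiv> harmonic_state z\<^sub>1 z\<^sub>2"

definition "u = omega \<gamma> \<delta> 0"
definition "v = omega \<gamma> \<delta> 1"
definition "gain = 2 * \<gamma> * (1 - v) - 1"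
definition "deg i = (\<Sum>k\<in>P. of_bool (E i k) :: real)"
\<comment> \<open>By balance, a persuadable node is adjacent to \<open>z\<^sub>1\<close> iff it is adjacent to \<open>z\<^sub>2\<close>.\<close>
definition "zealot_adj i = (of_bool (E i z\<^sub>1) :: real)"
definition "jac_den i = u * deg i + 2 * v * zealot_adj i"
definition "jac_num i j =
  u * of_bool (E i j) - (if i = j then u * deg i - 2 * v * gain * zealot_adj i else 0)"

lemma finite_V: "finite V"
  using graph by (simp add: simple_graph_def)

lemma finite_P: "finite P"
  using finite_V by simp

lemma edge_in_V: "E a b \<Longrightarrow> b \<in> V"
  using graph by (simp add: simple_graph_def)

lemma edge_sym: "E a b \<Longrightarrow> E b a"
  using graph by (simp add: simple_graph_def)

lemma harmonic_state_simps:
  "x\<^sub>h z\<^sub>1 = -1" "x\<^sub>h z\<^sub>2 = 1" "k \<in> P \<Longrightarrow> x\<^sub>h k = 0"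
  using zealots by (simp_all add: harmonic_state_def)

lemma sum_neighbours_split:
  assumes "i \<in> P"
  shows "(\<Sum>k\<in>V. if E i k then f k else 0)
     = (\<Sum>k\<in>P. if E i k then f k else 0) + zealot_adj i * (f z\<^sub>1 + f z\<^sub>2)"
proof -
  have "(\<Sum>k\<in>P \<union> {z\<^sub>1, z\<^sub>2}. if E i k then f k else 0)
      = (\<Sum>k\<in>P. if E i k then f k else 0) + (\<Sum>k\<in>{z\<^sub>1, z\<^sub>2}. if E i k then f k else 0)"
    using finite_V by (intro sum.union_disjoint) auto
  moreover have "P \<union> {z\<^sub>1, z\<^sub>2} = V" using zealots by auto
  ultimately show ?thesis
    using assms balanced zealots by (simp add: zealot_adj_def)
qed

lemma has_neighbour: "i \<in> P \<Longrightarrow> \<exists>k\<in>V. E i k"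
  using conn zealots edge_in_V unfolding graph_connected_def
  by (metis DiffD1 DiffD2 converse_rtranclpE insertCI)

lemma sum_persuadable_harmonic:
  "i \<in> P \<Longrightarrow> (\<Sum>k\<in>P. if E i k then f (x\<^sub>h k - x\<^sub>h i) else 0) = f 0 * deg i"
  unfolding deg_def sum_distrib_left by (intro sum.cong) (auto simp: harmonic_state_def)

lemma harmonic_steady: "steady_state V E P \<gamma> \<delta> x\<^sub>h"
  unfolding steady_state_def sbcm_rhs_eq
proof (intro ballI)
  fix i assume "i \<in> P"
  have "omega \<gamma> \<delta> (-1) = omega \<gamma> \<delta> 1" by (simp add: omega_def)
  then have "(\<Sum>k\<in>V. if E i k then influence \<gamma> \<delta> (x\<^sub>h k - x\<^sub>h i) else 0) = 0"
    using \<open>i \<in> P\<close>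
    by (simp add: sum_neighbours_split sum_persuadable_harmonic harmonic_state_simps influence_def)
  then show "(\<Sum>k\<in>V. if E i k then influence \<gamma> \<delta> (x\<^sub>h k - x\<^sub>h i) else 0)
      / (\<Sum>k\<in>V. weight E \<gamma> \<delta> x\<^sub>h i k) = 0"
    by simp
qed

lemma weight_sum_harmonic: "i \<in> P \<Longrightarrow> (\<Sum>k\<in>V. weight E \<gamma> \<delta> x\<^sub>h i k) = jac_den i"
  unfolding weight_eq
  by (simp add: sum_neighbours_split sum_persuadable_harmonic harmonic_state_simps jac_den_def
      u_def v_def omega_def)

lemma u_pos: "u > 0" and v_pos: "v > 0"
  by (simp_all add: u_def v_def omega_pos)

lemma jac_den_pos: assumes "i \<in> P" shows "jac_den i > 0"
proof -
  obtain k where "k \<in> V" "E i k" using has_neighbour[OF assms] by blast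
  have "deg i \<ge> 0" "zealot_adj i \<ge> 0" by (simp_all add: deg_def zealot_adj_def sum_nonneg)
  show ?thesis
  proof (cases "k \<in> P")
    case True
    then have "of_bool (E i k) \<le> deg i"
      unfolding deg_def using finite_V by (intro member_le_sum) auto
    then show ?thesis
      using \<open>E i k\<close> \<open>zealot_adj i \<ge> 0\<close> u_pos v_pos by (simp add: jac_den_def add_pos_nonneg)
  next
    case False
    then have "E i z\<^sub>1" using \<open>k \<in> V\<close> \<open>E i k\<close> balanced assms by auto
    then show ?thesis
      using \<open>deg i \<ge> 0\<close> u_pos v_pos by (simp add: jac_den_def zealot_adj_def add_nonneg_pos)
  qed
qed

lemma influence_deriv_values:
  "influence_deriv \<gamma> \<delta> 0 = u"
  "influence_deriv \<gamma> \<delta> 1 = - v * gain"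
  "influence_deriv \<gamma> \<delta> (-1) = - v * gain"
  by (simp_all add: influence_deriv_def u_def v_def gain_def omega_def algebra_simps)

lemma jacobian_harmonic:
  assumes "i \<in> P" "j \<in> P"
  shows "jacobian V E \<gamma> \<delta> x\<^sub>h i j = jac_num i j / jac_den i"
proof -
  obtain k where "k \<in> V" "E i k" using has_neighbour[OF assms(1)] by blast
  have "sbcm_rhs V E \<gamma> \<delta> x\<^sub>h i = 0"
    using harmonic_steady assms(1) by (simp add: steady_state_def)
  note jac = jacobian_at_rest[OF finite_V \<open>k \<in> V\<close> \<open>E i k\<close> this]
  define c where
    "c k = influence_deriv \<gamma> \<delta> (x\<^sub>h k - x\<^sub>h i) * (of_bool (k = j) - of_bool (i = j))" for k
  have "(\<Sum>k\<in>P. if E i k then c k else 0)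
      = (\<Sum>k\<in>P. (if k = j then u * of_bool (E i j) else 0) - (if i = j then u * of_bool (E i k) else 0))"
    using assms by (intro sum.cong) (auto simp: c_def harmonic_state_def influence_deriv_values)
  also have "\<dots> = u * of_bool (E i j) - (if i = j then u * deg i else 0)"
    using assms finite_V by (simp add: sum_subtractf deg_def sum_distrib_left)
  finally have "(\<Sum>k\<in>V. if E i k then c k else 0) = jac_num i j"
    using assms by (cases "i = j") (auto simp: c_def sum_neighbours_split harmonic_state_simps
        influence_deriv_values jac_num_def)
  then show ?thesis
    using assms unfolding c_def by (simp add: jac weight_sum_harmonic)
qed

lemma jac_num_sym: "\<forall>i\<in>P. \<forall>j\<in>P. jac_num i j = jac_num j i"
  using edge_sym by (auto simp: jac_num_def)

lemma bilin_form_jac_num: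
  "bilin_form P jac_num a a = - u / 2 * (\<Sum>i\<in>P. \<Sum>j\<in>P. of_bool (E i j) * (a i - a j)\<^sup>2)
     + 2 * v * gain * (\<Sum>i\<in>P. zealot_adj i * (a i)\<^sup>2)"
proof -
  have "(\<Sum>j\<in>P. jac_num i j * a j)
      = u * (\<Sum>j\<in>P. of_bool (E i j) * a j) - (u * deg i - 2 * v * gain * zealot_adj i) * a i"
    if "i \<in> P" for i
  proof -
    have "(\<Sum>j\<in>P. jac_num i j * a j) = (\<Sum>j\<in>P. u * (of_bool (E i j) * a j)
        - (if i = j then (u * deg i - 2 * v * gain * zealot_adj i) * a i else 0))"
      by (intro sum.cong) (auto simp: jac_num_def left_diff_distrib)
    then show ?thesis
      using that finite_V
      by (simp add: sum_subtractf sum_distrib_left del: sum_mult_of_bool_eq sum_of_bool_mult_eq)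
  qed
  then have "bilin_form P jac_num a a = (\<Sum>i\<in>P. a i * (u * (\<Sum>j\<in>P. of_bool (E i j) * a j)
      - (u * deg i - 2 * v * gain * zealot_adj i) * a i))"
    unfolding bilin_form_row by (intro sum.cong refl) (simp only:)
  also have "\<dots> = u * ((\<Sum>i\<in>P. \<Sum>j\<in>P. of_bool (E i j) * a i * a j) - (\<Sum>i\<in>P. deg i * (a i)\<^sup>2))
        + 2 * v * gain * (\<Sum>i\<in>P. zealot_adj i * (a i)\<^sup>2)"
    by (simp add: sum_subtractf sum.distrib sum_distrib_left power2_eq_square algebra_simps
        del: sum_mult_of_bool_eq sum_of_bool_mult_eq)
  also have "\<dots> = - u / 2 * (\<Sum>i\<in>P. \<Sum>j\<in>P. of_bool (E i j) * (a i - a j)\<^sup>2)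
        + 2 * v * gain * (\<Sum>i\<in>P. zealot_adj i * (a i)\<^sup>2)"
    using laplacian_form[of P E a] finite_V edge_sym by (simp add: deg_def)
  finally show ?thesis .
qed

lemma locally_constant_imp_zero:
  assumes "\<forall>i\<in>P. \<forall>j\<in>P. E i j \<longrightarrow> a i = a j" and "\<forall>i\<in>P. E i z\<^sub>1 \<longrightarrow> a i = 0"
  shows "\<forall>i\<in>P. a i = 0"
proof
  fix i assume "i \<in> P"
  show "a i = 0"
  proof (rule connected_locally_constant[OF conn _ _ _ assms(1)])
    show "\<forall>i\<in>P. \<forall>z\<in>{z\<^sub>1, z\<^sub>2}. E i z \<longrightarrow> a i = 0" using assms(2) balanced by blast
  qed (use edge_in_V zealots \<open>i \<in> P\<close> in auto)
qed

lemma bilin_form_jac_num_neg: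
  assumes "gain < 0" and "\<exists>i\<in>P. a i \<noteq> 0"
  shows "bilin_form P jac_num a a < 0"
proof (rule ccontr)
  assume "\<not> bilin_form P jac_num a a < 0"
  define S\<^sub>1 where "S\<^sub>1 = (\<Sum>i\<in>P. \<Sum>j\<in>P. of_bool (E i j) * (a i - a j)\<^sup>2)"
  define S\<^sub>2 where "S\<^sub>2 = (\<Sum>i\<in>P. zealot_adj i * (a i)\<^sup>2)"
  have "S\<^sub>1 \<ge> 0" "S\<^sub>2 \<ge> 0"
    unfolding S\<^sub>1_def S\<^sub>2_def zealot_adj_def by (simp_all add: sum_nonneg)
  moreover have "0 \<le> - u / 2 * S\<^sub>1 + 2 * v * gain * S\<^sub>2"
    using \<open>\<not> bilin_form P jac_num a a < 0\<close> by (simp add: bilin_form_jac_num S\<^sub>1_def S\<^sub>2_def)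
  moreover have "- u / 2 * S\<^sub>1 \<le> 0" "2 * v * gain * S\<^sub>2 \<le> 0"
    using u_pos v_pos \<open>gain < 0\<close> \<open>S\<^sub>1 \<ge> 0\<close> \<open>S\<^sub>2 \<ge> 0\<close>
    by (simp_all add: mult_nonpos_nonneg)
  ultimately have "u * S\<^sub>1 = 0" "v * gain * S\<^sub>2 = 0"
    by linarith+
  then have "S\<^sub>1 = 0" "S\<^sub>2 = 0"
    using u_pos v_pos \<open>gain < 0\<close> by simp_all
  have "\<forall>i\<in>P. \<forall>j\<in>P. E i j \<longrightarrow> a i = a j"
    using \<open>S\<^sub>1 = 0\<close> finite_V unfolding S\<^sub>1_def
    by (simp add: sum_nonneg_eq_0_iff sum_nonneg del: sum_of_bool_mult_eq)
  moreover have "\<forall>i\<in>P. E i z\<^sub>1 \<longrightarrow> a i = 0"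
    using \<open>S\<^sub>2 = 0\<close> finite_V unfolding S\<^sub>2_def zealot_adj_def
    by (simp add: sum_nonneg_eq_0_iff del: sum_of_bool_mult_eq)
  ultimately show False
    using locally_constant_imp_zero assms(2) by blast
qed

lemma bilin_form_jac_num_const: "bilin_form P jac_num (\<lambda>_. 1) (\<lambda>_. 1) = 2 * v * gain * (\<Sum>i\<in>P. zealot_adj i)"
  by (simp add: bilin_form_jac_num)

lemma is_eigenvalue_jacobian_harmonic:
  "is_eigenvalue_on P (jacobian V E \<gamma> \<delta> x\<^sub>h) \<mu>
     \<longleftrightarrow> is_eigenvalue_on P (\<lambda>i j. jac_num i j / jac_den i) \<mu>"
  by (rule is_eigenvalue_on_cong) (simp add: jacobian_harmonic)

lemma linearly_stable_harmonic_if_gain_neg: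
  assumes "gain < 0"
  shows "linearly_stable V E P \<gamma> \<delta> x\<^sub>h"
  unfolding linearly_stable_def is_eigenvalue_jacobian_harmonic
  using eigenvalue_neg_if_neg_definite[OF finite_P jac_num_sym] jac_den_pos
    bilin_form_jac_num_neg[OF assms] by blast

lemma not_linearly_stable_harmonic:
  assumes "P \<noteq> {}" and "gain \<ge> 0"
  shows "\<not> linearly_stable V E P \<gamma> \<delta> x\<^sub>h"
proof -
  have "0 \<le> bilin_form P jac_num (\<lambda>_. 1) (\<lambda>_. 1)"
    using v_pos assms(2) by (simp add: bilin_form_jac_num_const zealot_adj_def sum_nonneg)
  then obtain \<rho> where "\<rho> \<ge> 0"
    and "is_eigenvalue_on P (\<lambda>i j. jac_num i j / jac_den i) (complex_of_real \<rho>)"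
    using exists_nonneg_eigenvalue[OF finite_P jac_num_sym, of jac_den "\<lambda>_. 1"] jac_den_pos assms(1)
    by auto
  then show ?thesis
    unfolding linearly_stable_def is_eigenvalue_jacobian_harmonic by fastforce
qed

end

theorem theorem6:
  fixes V :: "'a set" and E :: "'a \<Rightarrow> 'a \<Rightarrow> bool" and z1 z2 :: 'a and \<gamma> \<delta> :: real
  assumes graph: "simple_graph V E"
    and conn: "graph_connected V E"
    and zealots: "z1 \<in> V" "z2 \<in> V" "z1 \<noteq> z2"
    and persuadable_nonempty: "V - {z1, z2} \<noteq> {}"
    and balanced: "\<forall>i \<in> V - {z1, z2}. E i z1 \<longleftrightarrow> E i z2"
    and params: "\<gamma> \<ge> 0" "\<delta> \<ge> 0"
  shows "steady_state V E (V - {z1, z2}) \<gamma> \<delta> (harmonic_state z1 z2)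
       \<and> (linearly_stable V E (V - {z1, z2}) \<gamma> \<delta> (harmonic_state z1 z2)
            \<longleftrightarrow> 2 * \<gamma> * (1 - omega \<gamma> \<delta> 1) - 1 < 0)"
proof -
  interpret two_zealots V E z1 z2 \<gamma> \<delta>
    using graph conn zealots balanced by unfold_locales
  have "linearly_stable V E (V - {z1, z2}) \<gamma> \<delta> (harmonic_state z1 z2) \<longleftrightarrow> gain < 0"
    using linearly_stable_harmonic_if_gain_neg not_linearly_stable_harmonic[OF persuadable_nonempty]
    by fastforce
  then show ?thesis
    using harmonic_steady by (simp add: gain_def v_def)
qed

end
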